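(* Let $K$ be an $\mathbb N$-valued random variable with $\Pr(K=k)=k^{-5/4}/c$, and let $Y$ be a random variable coupled with $K$ taking the value "red" with conditional probability $2^{-K}$ and "blue" with conditional probability $1-2^{-K}$. Let $(K_i,Y_i)_{i\in\mathbb N}$ be i.i.d. copies of $(K,Y)$. Then almost every realization $(k_i,y_i)$ stabilizes, i.e. there is $i_0$ such that for all $i>i_0$: (1) the maximal value $k_m$ among $k_1,\ldots,k_i$ is a simple record; (2) $\max\{k_1,\ldots,k_i\}>i$; (3) $y_m=$ "blue" for the maximal record-time $m\le i$.
   Context: For a sequence $(k_i)$ of natural numbers, $i$ is a record-time if $k_i>k_j$ for all $j<i$, a non-strict record-time if $k_i\ge k_j$ for all $j<i$, and a record-time $i$ (or record $k_i$) is simple if $k_i<k_j$ for every non-strict record-time $j>i$. *)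

theory Defs
  imports "HOL-Probability.Probability"
begin

datatype colour = Red | Blue

text \<open>Sequences are indexed from 1; index 0 is ignored.\<close>

definition record_time :: "(nat \<Rightarrow> nat) \<Rightarrow> nat \<Rightarrow> bool" where
  "record_time k i \<longleftrightarrow> i \<ge> 1 \<and> (\<forall>j\<in>{1..<i}. k j < k i)"

definition nonstrict_record_time :: "(nat \<Rightarrow> nat) \<Rightarrow> nat \<Rightarrow> bool" where
  "nonstrict_record_time k i \<longleftrightarrow> i \<ge> 1 \<and> (\<forall>j\<in>{1..<i}. k j \<le> k i)"

definition simple_record_time :: "(nat \<Rightarrow> nat) \<Rightarrow> nat \<Rightarrow> bool" where
  "simple_record_time k i \<longleftrightarrow> record_time k i \<and>
     (\<forall>j>i. nonstrict_record_time k j \<longrightarrow> k i < k j)"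

definition norm_c :: real where
  "norm_c = (\<Sum>k. real (Suc k) powr (-5/4))"

text \<open>Joint law of (K,Y): P(K=k, Y=y) for k a natural number (K >= 1).\<close>
definition KY_prob :: "nat \<Rightarrow> colour \<Rightarrow> real" where
  "KY_prob k y = (if k = 0 then 0 else
     (real k powr (-5/4) / norm_c) *
       (case y of Red \<Rightarrow> (1/2) ^ k | Blue \<Rightarrow> 1 - (1/2) ^ k))"

definition max_record_time :: "(nat \<Rightarrow> nat) \<Rightarrow> nat \<Rightarrow> nat" where
  "max_record_time k i = (GREATEST m. m \<le> i \<and> record_time k m)"

end

theory Submission
  imports Defs
begin

text \<open>
  The law p(v) = v^(-5/4) / c of K has tail P(K > V) of order V^(-1/4). Three applications of
  the Borel--Cantelli lemma give, almost surely and for all large n: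
  (a) some K_l with l <= n exceeds n^2, since all of them stay below n^2 with probability
      about (1 - n^(-1/2))^n <= exp (- sqrt n);
  (b) K_(n+1) > n^2 does not repeat one of K_1, ..., K_n, which has probability at most
      n p(n^2 + 1) <= n^(-3/2);
  (c) K_(n+1) > n does not come with colour red, which has probability at most 2^(-n).
  By (a) the maximum of k_1, ..., k_i exceeds i and is attained at a record time tending to
  infinity with i. A non-strict record at a late time n + 1 lies above n^2 by (a), so (b) makes
  a late record simple and (c) makes it blue.
\<close>

lemma UNIV_colour: "(UNIV :: colour set) = {Red, Blue}"
  using colour.exhaust by auto

lemma summable_norm_c: "summable (\<lambda>k. real (Suc k) powr (-5/4))"
  using summable_real_powr_iff[of "-5/4"] summable_Suc_iff[of "\<lambda>n. real n powr (-5/4)"] by simp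

lemma norm_c_ge_1: "norm_c \<ge> 1"
proof -
  have "(\<Sum>k\<in>{0}. real (Suc k) powr (-5/4)) \<le> (\<Sum>k. real (Suc k) powr (-5/4))"
    by (rule sum_le_suminf[OF summable_norm_c]) auto
  then show ?thesis unfolding norm_c_def by simp
qed

definition K_prob :: "nat \<Rightarrow> real" where
  "K_prob v = KY_prob v Red + KY_prob v Blue"

lemma K_prob_eq: "K_prob v = (if v = 0 then 0 else real v powr (-5/4) / norm_c)"
  using norm_c_ge_1 unfolding K_prob_def KY_prob_def by (simp add: field_simps)

lemma K_prob_nonneg: "K_prob v \<ge> 0"
  using norm_c_ge_1 by (simp add: K_prob_eq)

lemma K_prob_antimono: "1 \<le> u \<Longrightarrow> u \<le> v \<Longrightarrow> K_prob v \<le> K_prob u"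
  using norm_c_ge_1 by (auto simp: K_prob_eq divide_right_mono powr_mono2')

lemma sums_K_prob: "K_prob sums 1"
proof -
  have "(\<lambda>k. real (Suc k) powr (-5/4) / norm_c) sums (norm_c / norm_c)"
    unfolding norm_c_def by (intro sums_divide summable_sums summable_norm_c)
  then have "(\<lambda>k. K_prob (Suc k)) sums 1"
    using norm_c_ge_1 by (simp add: K_prob_eq)
  then show ?thesis
    using sums_Suc_iff[of K_prob 1] by (simp add: K_prob_eq)
qed

lemma KY_prob_Red_le: "KY_prob v Red \<le> (1/2) ^ v"
proof (cases "v = 0")
  case False
  then have "real v powr (-5/4) \<le> 1"
    by (simp add: powr_minus_divide ge_one_powr_ge_zero)
  then have "real v powr (-5/4) / norm_c \<le> 1"
    using norm_c_ge_1 by (simp add: divide_le_eq)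
  moreover have "KY_prob v Red = real v powr (-5/4) / norm_c * (1/2) ^ v"
    using False by (simp add: KY_prob_def)
  ultimately show ?thesis
    using mult_left_le_one_le[of "(1/2) ^ v" "real v powr (-5/4) / norm_c"] norm_c_ge_1 by simp
qed (simp add: KY_prob_def)

lemma K_prob_cdf_le:
  assumes "V \<ge> 1"
  shows "(\<Sum>v\<le>V. K_prob v) \<le> 1 - real V * ((2 * real V) powr (-5/4) / norm_c)"
proof -
  have total: "(\<Sum>v\<le>2*V. K_prob v) \<le> 1"
    using sum_le_suminf[OF sums_summable[OF sums_K_prob], of "{..2*V}"]
    by (simp add: K_prob_nonneg sums_unique[OF sums_K_prob, symmetric])
  have "{..2*V} = {..V} \<union> {V<..2*V}" by auto
  then have split: "(\<Sum>v\<le>2*V. K_prob v) = (\<Sum>v\<le>V. K_prob v) + (\<Sum>v\<in>{V<..2*V}. K_prob v)"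
    by (simp add: sum.union_disjoint ivl_disj_int)
  have "real (card {V<..2*V}) * ((2 * real V) powr (-5/4) / norm_c) \<le> (\<Sum>v\<in>{V<..2*V}. K_prob v)"
  proof (rule sum_bounded_below)
    fix v assume v: "v \<in> {V<..2*V}"
    then have "(2 * real V) powr (-5/4) \<le> real v powr (-5/4)"
      by (intro powr_mono2') auto
    then show "(2 * real V) powr (-5/4) / norm_c \<le> K_prob v"
      using v norm_c_ge_1 by (auto simp: K_prob_eq divide_right_mono)
  qed
  then show ?thesis using total split by simp
qed

lemma exp_neg_le_power:
  fixes y :: real and n :: nat
  assumes "y > 0" "n > 0"
  shows "exp (- y) \<le> (real n / y) ^ n"
proof -
  have "(y / real n) ^ n \<le> (1 + y / real n) ^ n"
    using assms by (intro power_mono) auto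
  also have "\<dots> \<le> exp y"
    using exp_ge_one_plus_x_over_n_power_n[where x = y and n = n] assms by simp
  finally show ?thesis
    using assms by (simp add: exp_minus power_divide field_simps)
qed

lemma K_prob_cdf_power_le:
  assumes "i \<ge> 1"
  shows "(\<Sum>v\<le>i^2. K_prob v) ^ i \<le> (4 * norm_c / 2 powr (-5/4)) ^ 4 / real i ^ 2"
proof -
  define a where "a = 2 powr (-5/4) / norm_c"
  define x where "x = real (i^2) * ((2 * real (i^2)) powr (-5/4) / norm_c)"
  have i: "real i > 0" using assms by simp
  have "real i * (real i ^ 2 * (2 * real i ^ 2) powr (-5/4))
      = 2 powr (-5/4) * (real i powr 1 * real i powr 2 * real i powr (2 * (-5/4)))"
    using i by (simp add: powr_mult powr_powr flip: powr_numeral)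
  also have "\<dots> = 2 powr (-5/4) * sqrt (real i)"
    unfolding powr_add[symmetric] using i by (simp add: powr_half_sqrt)
  finally have ix: "real i * x = a * sqrt (real i)"
    unfolding x_def a_def by (simp add: field_simps)
  have "sqrt (real i) ^ 4 = (sqrt (real i) ^ 2) ^ 2"
    by (simp only: power_mult [symmetric]) simp
  then have sqrt_4: "sqrt (real i) ^ 4 = real i ^ 2"
    by simp
  have "(\<Sum>v\<le>i^2. K_prob v) ^ i \<le> exp (- x) ^ i"
    using K_prob_cdf_le[of "i^2"] exp_ge_add_one_self[of "- x"] assms
    by (intro power_mono sum_nonneg K_prob_nonneg) (simp_all add: x_def)
  also have "\<dots> = exp (- (a * sqrt (real i)))"
    by (simp add: ix [symmetric] exp_of_nat_mult [symmetric])
  also have "\<dots> \<le> (4 / (a * sqrt (real i))) ^ 4"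
    using exp_neg_le_power[of "a * sqrt (real i)" 4] i norm_c_ge_1 by (simp add: a_def)
  also have "\<dots> = (4 / a) ^ 4 / real i ^ 2"
    using sqrt_4 by (simp add: power_divide power_mult_distrib)
  finally show ?thesis by (simp add: a_def)
qed

lemma K_prob_square_tail_le:
  assumes "n \<ge> 1"
  shows "real n * K_prob (n^2 + 1) \<le> real n powr (-3/2)"
proof -
  have n: "real n > 0" using assms by simp
  have "K_prob (n^2 + 1) \<le> real (n^2 + 1) powr (-5/4)"
    using divide_left_mono[of 1 norm_c] norm_c_ge_1 by (simp add: K_prob_eq)
  also have "\<dots> \<le> (real n ^ 2) powr (-5/4)"
    using assms by (intro powr_mono2') auto
  finally have "real n * K_prob (n^2 + 1) \<le> real n powr 1 * real n powr (2 * (-5/4))"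
    using n by (simp add: powr_powr mult_left_mono flip: powr_numeral)
  also have "\<dots> = real n powr (-3/2)"
    unfolding powr_add[symmetric] by simp
  finally show ?thesis .
qed

lemma (in finite_measure) measure_UN_le_suminf:
  assumes "range A \<subseteq> sets M" "\<And>v. measure M (A v) \<le> g v" "summable g"
  shows "measure M (\<Union>v. A v) \<le> (\<Sum>v. g v)"
proof -
  have summable: "summable (\<lambda>v. measure M (A v))"
    by (rule summable_comparison_test'[OF assms(3)]) (simp add: assms(2))
  then have "measure M (\<Union>v. A v) \<le> (\<Sum>v. measure M (A v))"
    by (rule finite_measure_subadditive_countably[OF assms(1)])
  also have "\<dots> \<le> (\<Sum>v. g v)"
    by (intro suminf_le assms(2,3) summable)
  finally show ?thesis .
qed

lemma (in prob_space) AE_eventually_not_if_summable: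
  assumes "\<And>n. {\<omega> \<in> space M. P n \<omega>} \<in> events"
    and "\<And>n. n \<ge> N \<Longrightarrow> prob {\<omega> \<in> space M. P n \<omega>} \<le> b n"
    and "summable b"
  shows "AE \<omega> in M. eventually (\<lambda>n. \<not> P n \<omega>) sequentially"
proof -
  have "AE \<omega> in M. eventually (\<lambda>n. \<omega> \<in> space M - {\<omega> \<in> space M. P n \<omega>}) sequentially"
  proof (rule borel_cantelli_AE1)
    show "summable (\<lambda>n. prob {\<omega> \<in> space M. P n \<omega>})"
      by (rule summable_comparison_test'[OF assms(3), where N = N]) (simp add: assms(2))
  qed (simp_all add: assms(1) less_top[symmetric])
  then show ?thesis
    by (rule AE_mp) (auto elim: eventually_mono)
qed

locale KY_sequence = prob_space M for M :: "'a measure" +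
  fixes K :: "nat \<Rightarrow> 'a \<Rightarrow> nat" and Y :: "nat \<Rightarrow> 'a \<Rightarrow> colour"
  assumes measurable_KY: "\<And>i. i \<ge> 1 \<Longrightarrow>
      (\<lambda>\<omega>. (K i \<omega>, Y i \<omega>)) \<in> measurable M (count_space UNIV)"
    and indep_KY: "indep_vars (\<lambda>_. count_space UNIV) (\<lambda>i \<omega>. (K i \<omega>, Y i \<omega>)) {1..}"
    and law_KY: "\<And>i k y. i \<ge> 1 \<Longrightarrow>
      measure M {\<omega> \<in> space M. K i \<omega> = k \<and> Y i \<omega> = y} = KY_prob k y"
begin

lemma events_KY: "i \<ge> 1 \<Longrightarrow> {\<omega> \<in> space M. P (K i \<omega>) (Y i \<omega>)} \<in> events"
  using measurable_sets[OF measurable_KY, of i "{(a, b). P a b}"]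
  by (simp add: vimage_def Int_def conj_commute)

lemma prob_K_in:
  assumes "i \<ge> 1" "finite V"
  shows "prob {\<omega> \<in> space M. K i \<omega> \<in> V} = (\<Sum>v\<in>V. K_prob v)"
proof -
  let ?E = "\<lambda>x. {\<omega> \<in> space M. K i \<omega> = fst x \<and> Y i \<omega> = snd x}"
  have "?E x \<in> events" for x
    using events_KY[OF assms(1), of "\<lambda>a b. a = fst x \<and> b = snd x"] by simp
  moreover have "{\<omega> \<in> space M. K i \<omega> \<in> V} = (\<Union>x\<in>V \<times> UNIV. ?E x)"
    by auto
  ultimately have "prob {\<omega> \<in> space M. K i \<omega> \<in> V} = (\<Sum>x\<in>V \<times> UNIV. prob (?E x))"
    using assms(2) by (auto simp: UNIV_colour disjoint_family_on_def intro!: finite_measure_finite_Union)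
  also have "\<dots> = (\<Sum>x\<in>V \<times> UNIV. KY_prob (fst x) (snd x))"
    using law_KY[OF assms(1)] by simp
  also have "\<dots> = (\<Sum>v\<in>V. K_prob v)"
    by (simp add: sum.cartesian_product' UNIV_colour K_prob_def)
  finally show ?thesis .
qed

lemma prob_all_K_in:
  assumes "finite J" "J \<noteq> {}" "J \<subseteq> {1..}" "\<And>l. l \<in> J \<Longrightarrow> finite (V l)"
  shows "prob {\<omega> \<in> space M. \<forall>l\<in>J. K l \<omega> \<in> V l} = (\<Prod>l\<in>J. \<Sum>v\<in>V l. K_prob v)"
proof -
  let ?X = "\<lambda>l \<omega>. (K l \<omega>, Y l \<omega>)" and ?A = "\<lambda>l. {x. fst x \<in> V l}"
  have "{\<omega> \<in> space M. \<forall>l\<in>J. K l \<omega> \<in> V l} = (\<Inter>l\<in>J. ?X l -` ?A l \<inter> space M)"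
    using assms(2) by auto
  also have "prob \<dots> = (\<Prod>l\<in>J. prob (?X l -` ?A l \<inter> space M))"
    using assms(1-3) by (intro indep_varsD[OF indep_KY]) auto
  also have "\<dots> = (\<Prod>l\<in>J. \<Sum>v\<in>V l. K_prob v)"
  proof (rule prod.cong [OF refl])
    fix l assume "l \<in> J"
    then have "?X l -` ?A l \<inter> space M = {\<omega> \<in> space M. K l \<omega> \<in> V l}" "l \<ge> 1" "finite (V l)"
      using assms(3,4) by auto
    then show "prob (?X l -` ?A l \<inter> space M) = (\<Sum>v\<in>V l. K_prob v)"
      by (simp add: prob_K_in)
  qed
  finally show ?thesis .
qed

lemma AE_eventually_K_gt_square:
  "AE \<omega> in M. eventually (\<lambda>i. \<exists>l\<in>{1..i}. K l \<omega> > i^2) sequentially"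
proof -
  let ?C = "(4 * norm_c / 2 powr (-5/4)) ^ 4"
  have "AE \<omega> in M. eventually (\<lambda>i. \<not> (\<forall>l\<in>{1..i}. K l \<omega> \<le> i^2)) sequentially"
  proof (rule AE_eventually_not_if_summable[where N = 1 and b = "\<lambda>i. ?C / real i ^ 2"])
    show "{\<omega> \<in> space M. \<forall>l\<in>{1..i}. K l \<omega> \<le> i^2} \<in> events" for i
      by (intro sets.sets_Collect_finite_All events_KY) auto
    show "summable (\<lambda>i. ?C / real i ^ 2)"
      unfolding divide_inverse by (intro summable_mult inverse_power_summable) auto
    fix i :: nat assume "i \<ge> 1"
    then have "prob {\<omega> \<in> space M. \<forall>l\<in>{1..i}. K l \<omega> \<in> {..i^2}} = (\<Sum>v\<le>i^2. K_prob v) ^ i"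
      by (subst prob_all_K_in) auto
    then show "prob {\<omega> \<in> space M. \<forall>l\<in>{1..i}. K l \<omega> \<le> i^2} \<le> ?C / real i ^ 2"
      using K_prob_cdf_power_le[OF \<open>i \<ge> 1\<close>] by simp
  qed
  then show ?thesis
    by (simp add: not_le)
qed

lemma events_K_tie:
  assumes "l \<ge> 1" "j \<ge> 1"
  shows "{\<omega> \<in> space M. K l \<omega> = K j \<omega> \<and> V < K j \<omega>} \<in> events"
proof -
  have "{\<omega> \<in> space M. \<exists>v. K l \<omega> = v \<and> K j \<omega> = v \<and> V < v} \<in> events"
    using assms by (intro sets.sets_Collect_countable_Ex sets.sets_Collect_conj events_KY) auto
  then show ?thesis
    by (auto elim!: back_subst[of "\<lambda>A. A \<in> events"])
qed

lemma prob_K_tie_le: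
  assumes "l \<ge> 1" "j \<ge> 1" "l \<noteq> j"
  shows "prob {\<omega> \<in> space M. K l \<omega> = K j \<omega> \<and> V < K j \<omega>} \<le> K_prob (Suc V)"
proof -
  define B where "B v = {\<omega> \<in> space M. \<forall>i\<in>{l, j}. K i \<omega> \<in> (if V < v then {v} else {})}" for v
  have events: "range B \<subseteq> events"
    unfolding B_def using assms by (intro image_subsetI sets.sets_Collect_finite_All events_KY) auto
  have bound: "prob (B v) \<le> K_prob (Suc V) * K_prob v" for v
  proof -
    have "prob (B v) = (if V < v then K_prob v * K_prob v else 0)"
      unfolding B_def using assms by (subst prob_all_K_in) auto
    then show ?thesis
      by (auto intro!: mult_right_mono mult_nonneg_nonneg K_prob_antimono K_prob_nonneg)
  qed
  have sums: "(\<lambda>v. K_prob (Suc V) * K_prob v) sums (K_prob (Suc V) * 1)"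
    by (intro sums_mult sums_K_prob)
  have "{\<omega> \<in> space M. K l \<omega> = K j \<omega> \<and> V < K j \<omega>} = (\<Union>v. B v)"
    unfolding B_def by (auto split: if_splits)
  also have "prob \<dots> \<le> (\<Sum>v. K_prob (Suc V) * K_prob v)"
    by (rule measure_UN_le_suminf[OF events bound sums_summable[OF sums]])
  also have "\<dots> = K_prob (Suc V)"
    using sums_unique[OF sums] by simp
  finally show ?thesis .
qed

lemma AE_eventually_no_tie_above_square:
  "AE \<omega> in M. eventually
     (\<lambda>n. \<not> (\<exists>l\<in>{1..n}. K l \<omega> = K (Suc n) \<omega> \<and> K (Suc n) \<omega> > n^2)) sequentially"
proof (rule AE_eventually_not_if_summable[where N = 1 and b = "\<lambda>n. real n powr (-3/2)"])
  let ?T = "\<lambda>n l. {\<omega> \<in> space M. K l \<omega> = K (Suc n) \<omega> \<and> n^2 < K (Suc n) \<omega>}"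
  show "{\<omega> \<in> space M. \<exists>l\<in>{1..n}. K l \<omega> = K (Suc n) \<omega> \<and> K (Suc n) \<omega> > n^2} \<in> events" for n
    by (intro sets.sets_Collect_finite_Ex events_K_tie) auto
  show "summable (\<lambda>n. real n powr (-3/2))"
    by (simp add: summable_real_powr_iff)
  fix n :: nat assume n: "n \<ge> 1"
  have "{\<omega> \<in> space M. \<exists>l\<in>{1..n}. K l \<omega> = K (Suc n) \<omega> \<and> K (Suc n) \<omega> > n^2} = (\<Union>l\<in>{1..n}. ?T n l)"
    by auto
  also have "prob \<dots> \<le> (\<Sum>l\<in>{1..n}. prob (?T n l))"
    by (intro finite_measure_subadditive_finite) (auto intro: events_K_tie)
  also have "\<dots> \<le> (\<Sum>l\<in>{1..n}. K_prob (n^2 + 1))"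
    by (intro sum_mono) (auto intro: prob_K_tie_le [THEN order_trans])
  also have "\<dots> \<le> real n powr (-3/2)"
    using K_prob_square_tail_le[OF n] by simp
  finally show "prob {\<omega> \<in> space M. \<exists>l\<in>{1..n}. K l \<omega> = K (Suc n) \<omega> \<and> K (Suc n) \<omega> > n^2}
      \<le> real n powr (-3/2)" .
qed

lemma prob_late_Red_le:
  assumes "j \<ge> 1"
  shows "prob {\<omega> \<in> space M. K j \<omega> \<ge> j \<and> Y j \<omega> = Red} \<le> 4 * (2/3) ^ j"
proof -
  define S where "S v = {\<omega> \<in> space M. K j \<omega> = v \<and> Y j \<omega> = Red \<and> j \<le> v}" for v
  have events: "range S \<subseteq> events"
    unfolding S_def using assms by (auto intro!: events_KY)
  have bound: "prob (S v) \<le> (2/3) ^ j * (3/4) ^ v" for v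
  proof (cases "j \<le> v")
    case True
    have "prob (S v) = KY_prob v Red"
      unfolding S_def using True law_KY[OF assms] by simp
    also have "\<dots> \<le> (1/2) ^ v"
      by (rule KY_prob_Red_le)
    also have "\<dots> = (2/3) ^ v * (3/4) ^ v"
      by (simp flip: power_mult_distrib)
    also have "\<dots> \<le> (2/3) ^ j * (3/4) ^ v"
      using True by (intro mult_right_mono power_decreasing) auto
    finally show ?thesis .
  qed (simp add: S_def)
  have sums: "(\<lambda>v. (2/3) ^ j * (3/4) ^ v) sums ((2/3) ^ j * (1 / (1 - 3/4)) :: real)"
    by (intro sums_mult geometric_sums) simp
  have "{\<omega> \<in> space M. K j \<omega> \<ge> j \<and> Y j \<omega> = Red} = (\<Union>v. S v)"
    unfolding S_def by auto
  also have "prob \<dots> \<le> (\<Sum>v. (2/3) ^ j * (3/4) ^ v)"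
    by (rule measure_UN_le_suminf[OF events bound sums_summable[OF sums]])
  also have "\<dots> = 4 * (2/3) ^ j"
    using sums_unique[OF sums] by simp
  finally show ?thesis .
qed

lemma AE_eventually_no_late_Red:
  "AE \<omega> in M. eventually (\<lambda>n. \<not> (K (Suc n) \<omega> \<ge> Suc n \<and> Y (Suc n) \<omega> = Red)) sequentially"
proof (rule AE_eventually_not_if_summable[where N = 0 and b = "\<lambda>n. 4 * (2/3) ^ Suc n"])
  show "{\<omega> \<in> space M. K (Suc n) \<omega> \<ge> Suc n \<and> Y (Suc n) \<omega> = Red} \<in> events" for n
    by (intro events_KY) simp
  show "prob {\<omega> \<in> space M. K (Suc n) \<omega> \<ge> Suc n \<and> Y (Suc n) \<omega> = Red} \<le> 4 * (2/3) ^ Suc n" for n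
    by (rule prob_late_Red_le) simp
  show "summable (\<lambda>n. 4 * (2/3::real) ^ Suc n)"
    by (simp add: summable_geometric)
qed

end

lemma max_record_time:
  fixes k :: "nat \<Rightarrow> nat"
  assumes "i \<ge> 1"
  shows "max_record_time k i \<in> {1..i}" "record_time k (max_record_time k i)"
    and "k (max_record_time k i) = Max (k ` {1..i})"
proof -
  define Mx where "Mx = Max (k ` {1..i})"
  have below: "k l \<le> Mx" if "l \<in> {1..i}" for l
    unfolding Mx_def using that by (intro Max_ge) auto
  have "Mx \<in> k ` {1..i}"
    unfolding Mx_def using assms by (intro Max_in) auto
  then have "\<exists>m. m \<in> {1..i} \<and> k m = Mx" by auto
  define m where "m = (LEAST m. m \<in> {1..i} \<and> k m = Mx)"
  have m: "m \<in> {1..i}" "k m = Mx"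
    unfolding m_def using LeastI_ex[OF \<open>\<exists>m. m \<in> {1..i} \<and> k m = Mx\<close>] by auto
  have is_record: "record_time k m"
    unfolding record_time_def
  proof (intro conjI ballI)
    fix l assume l: "l \<in> {1..<m}"
    then have "k l \<noteq> Mx"
      using m(1) not_less_Least[of l "\<lambda>m. m \<in> {1..i} \<and> k m = Mx"] by (auto simp: m_def)
    then show "k l < k m"
      using l m below[of l] by auto
  qed (use m in auto)
  have "max_record_time k i = m"
    unfolding max_record_time_def
  proof (rule Greatest_equality)
    fix m' assume m': "m' \<le> i \<and> record_time k m'"
    show "m' \<le> m"
    proof (rule ccontr)
      assume "\<not> m' \<le> m"
      then have "m \<in> {1..<m'}" using m(1) by auto
      then have "k m < k m'" using m' unfolding record_time_def by blast
      moreover have "k m' \<le> k m"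
        using m' m(2) below[of m'] unfolding record_time_def by auto
      ultimately show False by simp
    qed
  qed (use m is_record in auto)
  then show "max_record_time k i \<in> {1..i}" "record_time k (max_record_time k i)"
    and "k (max_record_time k i) = Max (k ` {1..i})"
    using m is_record Mx_def by simp_all
qed

lemma eventually_Max_gt:
  fixes k :: "nat \<Rightarrow> nat"
  assumes "eventually (\<lambda>i. \<exists>l\<in>{1..i}. k l > i^2) sequentially"
  shows "eventually (\<lambda>i. i < Max (k ` {1..i})) sequentially"
  using assms
proof eventually_elim
  case (elim i)
  then obtain l where "l \<in> {1..i}" "i^2 < k l" by blast
  moreover have "i \<le> i^2" by (simp add: power2_eq_square)
  moreover have "k l \<le> Max (k ` {1..i})"
    using \<open>l \<in> {1..i}\<close> by (intro Max_ge) auto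
  ultimately show ?case by linarith
qed

lemma filterlim_max_record_time:
  fixes k :: "nat \<Rightarrow> nat"
  assumes "eventually (\<lambda>i. \<exists>l\<in>{1..i}. k l > i^2) sequentially"
  shows "filterlim (max_record_time k) at_top sequentially"
  unfolding filterlim_at_top
proof
  fix N :: nat
  let ?B = "Max (k ` {1..N})"
  have "eventually (\<lambda>i. ?B < i \<and> i < Max (k ` {1..i})) sequentially"
    using eventually_gt_at_top eventually_Max_gt[OF assms] by (rule eventually_conj)
  then show "eventually (\<lambda>i. N \<le> max_record_time k i) sequentially"
  proof eventually_elim
    case (elim i)
    then have "i \<ge> 1" "?B < k (max_record_time k i)"
      using max_record_time(3)[of i k] by auto
    show ?case
    proof (rule ccontr)
      assume "\<not> N \<le> max_record_time k i"
      then have "max_record_time k i \<in> {1..N}"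
        using max_record_time(1)[OF \<open>i \<ge> 1\<close>, of k] by auto
      then have "k (max_record_time k i) \<le> ?B"
        by (intro Max_ge) auto
      then show False using \<open>?B < k (max_record_time k i)\<close> by simp
    qed
  qed
qed

lemma nonstrict_record_time_Suc_gt:
  fixes k :: "nat \<Rightarrow> nat"
  assumes "nonstrict_record_time k (Suc n)" "\<exists>l\<in>{1..n}. k l > b"
  shows "b < k (Suc n)"
proof -
  obtain l where "l \<in> {1..n}" "b < k l"
    using assms(2) by blast
  moreover have "k l \<le> k (Suc n)"
    using assms(1) calculation(1) unfolding nonstrict_record_time_def by auto
  ultimately show ?thesis by linarith
qed

lemma eventually_record_simple_Blue:
  fixes k :: "nat \<Rightarrow> nat" and y :: "nat \<Rightarrow> colour"
  assumes big: "eventually (\<lambda>i. \<exists>l\<in>{1..i}. k l > i^2) sequentially"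
    and no_tie: "eventually (\<lambda>n. \<not> (\<exists>l\<in>{1..n}. k l = k (Suc n) \<and> k (Suc n) > n^2)) sequentially"
    and no_Red: "eventually (\<lambda>n. \<not> (k (Suc n) \<ge> Suc n \<and> y (Suc n) = Red)) sequentially"
  shows "eventually (\<lambda>m. record_time k m \<longrightarrow> simple_record_time k m \<and> y m = Blue) sequentially"
proof -
  obtain N where N: "\<And>n. n \<ge> N \<Longrightarrow> (\<exists>l\<in>{1..n}. k l > n^2) \<and>
      \<not> (\<exists>l\<in>{1..n}. k l = k (Suc n) \<and> k (Suc n) > n^2) \<and> \<not> (k (Suc n) \<ge> Suc n \<and> y (Suc n) = Red)"
    using eventually_conj[OF big eventually_conj[OF no_tie no_Red]]
    unfolding eventually_sequentially by blast
  have above: "n^2 < k (Suc n)" if "n \<ge> N" "nonstrict_record_time k (Suc n)" for n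
    using N[OF that(1)] that(2) by (blast intro: nonstrict_record_time_Suc_gt)
  have "record_time k m \<longrightarrow> simple_record_time k m \<and> y m = Blue" if "m > N" for m
  proof
    assume is_record: "record_time k m"
    then have nonstrict: "nonstrict_record_time k m"
      unfolding record_time_def nonstrict_record_time_def by auto
    obtain n where n: "m = Suc n" "n \<ge> N"
      using \<open>m > N\<close> by (cases m) auto
    have "k m < k j" if "j > m" "nonstrict_record_time k j" for j
    proof (rule ccontr)
      assume "\<not> k m < k j"
      moreover obtain n' where "j = Suc n'" "n' \<ge> N" "m \<in> {1..n'}"
        using \<open>j > m\<close> n is_record by (cases j) (auto simp: record_time_def)
      moreover have "k m \<le> k j"
        using that \<open>m \<in> {1..n'}\<close> \<open>j = Suc n'\<close> unfolding nonstrict_record_time_def by auto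
      ultimately show False
        using N[of n'] above[of n'] that(2) by auto
    qed
    then have "simple_record_time k m"
      using is_record unfolding simple_record_time_def by blast
    moreover have "n \<le> n^2" by (simp add: power2_eq_square)
    then have "y m \<noteq> Red"
      using N[OF n(2)] above[OF n(2)] nonstrict n(1) by auto
    ultimately show "simple_record_time k m \<and> y m = Blue"
      by (cases "y m") auto
  qed
  then show ?thesis
    unfolding eventually_sequentially by (meson Suc_le_eq)
qed

theorem mainTheorem6:
  fixes M :: "'a measure"
    and K :: "nat \<Rightarrow> 'a \<Rightarrow> nat"
    and Y :: "nat \<Rightarrow> 'a \<Rightarrow> colour"
  assumes "prob_space M"
    and meas: "\<And>i. i \<ge> 1 \<Longrightarrow>
      (\<lambda>\<omega>. (K i \<omega>, Y i \<omega>)) \<in> measurable M (count_space UNIV)"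
    and indep: "prob_space.indep_vars M (\<lambda>_. count_space UNIV)
      (\<lambda>i \<omega>. (K i \<omega>, Y i \<omega>)) {1..}"
    and law: "\<And>i k y. i \<ge> 1 \<Longrightarrow>
      measure M {\<omega> \<in> space M. K i \<omega> = k \<and> Y i \<omega> = y} = KY_prob k y"
  shows "AE \<omega> in M. \<exists>i0. \<forall>i>i0.
      (let k = (\<lambda>j. K j \<omega>); m = max_record_time k i in
         Max (k ` {1..i}) = k m \<and>
         simple_record_time k m \<and>
         Max (k ` {1..i}) > i \<and>
         Y m \<omega> = Blue)"
proof -
  interpret KY_sequence M K Y
    using assms unfolding KY_sequence_def KY_sequence_axioms_def by auto
  show ?thesis
    using AE_eventually_K_gt_square AE_eventually_no_tie_above_square AE_eventually_no_late_Red
  proof eventually_elim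
    case (elim \<omega>)
    let ?k = "\<lambda>j. K j \<omega>"
    let ?m = "max_record_time ?k"
    have "eventually (\<lambda>i. record_time ?k (?m i) \<longrightarrow> simple_record_time ?k (?m i) \<and> Y (?m i) \<omega> = Blue)
        sequentially"
      using eventually_record_simple_Blue[OF elim] filterlim_max_record_time[OF elim(1)]
      by (rule eventually_compose_filterlim)
    then have "eventually (\<lambda>i. let m = ?m i in
        Max (?k ` {1..i}) = ?k m \<and> simple_record_time ?k m \<and> Max (?k ` {1..i}) > i \<and> Y m \<omega> = Blue)
        sequentially"
      using eventually_Max_gt[OF elim(1)] eventually_ge_at_top[of 1]
      by eventually_elim (use max_record_time in \<open>auto simp: Let_def\<close>)
    then show ?case
      unfolding eventually_sequentially by (auto simp: Let_def intro: less_imp_le)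
  qed
qed

end
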